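(* Let $A,B\in\mathcal M_n$ be accretive with $W(A),W(B)\subset S_\alpha$ for some $0\le\alpha<\pi/2$. Let $f\in\mathfrak m$ with $f'(1)=t\in(0,1)$. Then $$\cos^2(\alpha)\,\Re(A!_tB)\le\Re(A\sigma_fB)\le\sec^2(\alpha)\,\Re(A\nabla_tB).$$
   Context: A matrix $A$ is accretive if $\Re A=\frac{A+A^*}{2}$ is positive definite. $W(A)$ is the numerical range, $S_\alpha=\{z:\Re z>0,\ |\Im z|\le\tan(\alpha)\Re z\}$. $\le$ is the Löwner order. $\mathfrak m$ is the set of matrix monotone $f:(0,\infty)\to(0,\infty)$ with $f(1)=1$; each has a unique probability measure $\nu_f$ on $[0,1]$ with $f(x)=\int_0^1((1-t)+tx^{-1})^{-1}d\nu_f(t)$, $x>0$. For accretive $A,B$: $A\nabla_tB=(1-t)A+tB$, $A!_tB=((1-t)A^{-1}+tB^{-1})^{-1}$, and $A\sigma_fB:=\int_0^1A!_sB\,d\nu_f(s)$. *)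

theory Defs
  imports "HOL-Probability.Probability" "Jordan_Normal_Form.Schur_Decomposition"
begin

text \<open>Complex n x n matrices are Jordan_Normal_Form matrices in carrier_mat n n.
  The quadratic form x^* M x is written (mult_mat_vec M x) \<bullet>c x.\<close>

definition hermitian_mat :: "complex mat \<Rightarrow> bool" where
  "hermitian_mat M \<longleftrightarrow> square_mat M \<and> mat_adjoint M = M"

definition pos_def_mat :: "complex mat \<Rightarrow> bool" where
  "pos_def_mat M \<longleftrightarrow> hermitian_mat M \<and>
     (\<forall>x \<in> carrier_vec (dim_row M). x \<noteq> 0\<^sub>v (dim_row M) \<longrightarrow>
        Im ((mult_mat_vec M x) \<bullet>c x) = 0 \<and> Re ((mult_mat_vec M x) \<bullet>c x) > 0)"

definition pos_semidef_mat :: "complex mat \<Rightarrow> bool" where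
  "pos_semidef_mat M \<longleftrightarrow> hermitian_mat M \<and>
     (\<forall>x \<in> carrier_vec (dim_row M).
        Im ((mult_mat_vec M x) \<bullet>c x) = 0 \<and> Re ((mult_mat_vec M x) \<bullet>c x) \<ge> 0)"

definition loewner_le :: "complex mat \<Rightarrow> complex mat \<Rightarrow> bool" where
  "loewner_le A B \<longleftrightarrow> dim_row A = dim_row B \<and> dim_col A = dim_col B \<and>
     pos_semidef_mat (B - A)"

definition re_mat :: "complex mat \<Rightarrow> complex mat" where
  "re_mat A = (1/2 :: complex) \<cdot>\<^sub>m (A + mat_adjoint A)"

definition accretive :: "complex mat \<Rightarrow> bool" where
  "accretive A \<longleftrightarrow> square_mat A \<and> pos_def_mat (re_mat A)"

definition num_range :: "complex mat \<Rightarrow> complex set" where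
  "num_range A = {(mult_mat_vec A x) \<bullet>c x | x. x \<in> carrier_vec (dim_col A) \<and> x \<bullet>c x = 1}"

definition sector :: "real \<Rightarrow> complex set" where
  "sector \<alpha> = {z. Re z > 0 \<and> \<bar>Im z\<bar> \<le> tan \<alpha> * Re z}"

definition minv :: "complex mat \<Rightarrow> complex mat" where
  "minv A = (SOME B. B \<in> carrier_mat (dim_row A) (dim_row A) \<and>
                     A * B = 1\<^sub>m (dim_row A) \<and> B * A = 1\<^sub>m (dim_row A))"

definition unitary_mat :: "complex mat \<Rightarrow> bool" where
  "unitary_mat U \<longleftrightarrow> square_mat U \<and> mat_adjoint U * U = 1\<^sub>m (dim_row U)
                                  \<and> U * mat_adjoint U = 1\<^sub>m (dim_row U)"

definition mat_fun :: "(real \<Rightarrow> real) \<Rightarrow> complex mat \<Rightarrow> complex mat" where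
  "mat_fun f A = (SOME M. \<exists>U D. U \<in> carrier_mat (dim_row A) (dim_row A) \<and>
       D \<in> carrier_mat (dim_row A) (dim_row A) \<and> unitary_mat U \<and> diagonal_mat D \<and>
       (\<forall>i < dim_row A. D $$ (i,i) = complex_of_real (Re (D $$ (i,i)))) \<and>
       A = U * D * mat_adjoint U \<and>
       M = U * mat (dim_row A) (dim_row A)
             (\<lambda>(i,j). if i = j then complex_of_real (f (Re (D $$ (i,i)))) else 0)
           * mat_adjoint U)"

definition matrix_monotone_class :: "(real \<Rightarrow> real) \<Rightarrow> bool" where
  "matrix_monotone_class f \<longleftrightarrow> (\<forall>x>0. f x > 0) \<and> f 1 = 1 \<and>
     (\<forall>n A B. A \<in> carrier_mat n n \<longrightarrow> B \<in> carrier_mat n n \<longrightarrow>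
        pos_def_mat A \<longrightarrow> pos_def_mat B \<longrightarrow> loewner_le A B \<longrightarrow>
        loewner_le (mat_fun f A) (mat_fun f B))"

definition represents :: "real measure \<Rightarrow> (real \<Rightarrow> real) \<Rightarrow> bool" where
  "represents \<nu> f \<longleftrightarrow> prob_space \<nu> \<and> sets \<nu> = sets (restrict_space borel {0..1::real}) \<and>
     (\<forall>x>0. f x = (\<integral>s. inverse ((1 - s) + s * inverse x) \<partial>\<nu>))"

definition arith_mean :: "real \<Rightarrow> complex mat \<Rightarrow> complex mat \<Rightarrow> complex mat" where
  "arith_mean t A B = complex_of_real (1 - t) \<cdot>\<^sub>m A + complex_of_real t \<cdot>\<^sub>m B"

definition harm_mean :: "real \<Rightarrow> complex mat \<Rightarrow> complex mat \<Rightarrow> complex mat" where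
  "harm_mean t A B = minv (complex_of_real (1 - t) \<cdot>\<^sub>m minv A + complex_of_real t \<cdot>\<^sub>m minv B)"

definition op_mean :: "real measure \<Rightarrow> complex mat \<Rightarrow> complex mat \<Rightarrow> complex mat" where
  "op_mean \<nu> A B = mat (dim_row A) (dim_col A)
      (\<lambda>(i,j). \<integral>s. harm_mean s A B $$ (i,j) \<partial>\<nu>)"

end

theory Submission
  imports Defs
begin

text \<open>Put \<open>\<tau> = tan \<alpha>\<close>, so \<open>1 + \<tau>\<^sup>2 = sec\<^sup>2 \<alpha>\<close>. If the numerical range of \<open>N\<close> lies in
  \<open>\<bar>Im z\<bar> \<le> \<tau> Re z\<close>, the sector conditions at the vectors \<open>\<plusminus>i\<tau>x + d\<close> give the perturbed
  variational inequality \<open>2 Re \<langle>x, w\<rangle> - Re \<langle>N w, w\<rangle> \<le> sec\<^sup>2 \<alpha> Re \<langle>N\<^sup>-\<^sup>1 x, x\<rangle>\<close> for all \<open>w\<close>,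
  while \<open>w = N\<^sup>-\<^sup>1 x\<close> turns the left side into \<open>Re \<langle>N\<^sup>-\<^sup>1 x, x\<rangle>\<close> exactly.
  Take \<open>N = (1 - s) A\<^sup>-\<^sup>1 + s B\<^sup>-\<^sup>1\<close>, whose inverse is \<open>A !\<^sub>s B\<close>. With \<open>w = (A !\<^sub>s B) x\<close> and the
  inequality for \<open>A\<^sup>-\<^sup>1\<close>, \<open>B\<^sup>-\<^sup>1\<close> one gets \<open>Re (A !\<^sub>s B) \<le> sec\<^sup>2 \<alpha> Re (A \<nabla>\<^sub>s B)\<close>; with the fixed
  vector \<open>w = (A !\<^sub>t B) x\<close> the left side is an affine function of \<open>s\<close> bounded by
  \<open>sec\<^sup>2 \<alpha> Re \<langle>(A !\<^sub>s B) x, x\<rangle>\<close> and equal to \<open>Re \<langle>(A !\<^sub>t B) x, x\<rangle>\<close> at \<open>s = t\<close>. Integrating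
  against \<open>\<nu>\<^sub>f\<close> evaluates affine functions of \<open>s\<close> at the mean of \<open>\<nu>\<^sub>f\<close>, and differentiating
  the integral representation of \<open>f\<close> at \<open>1\<close> shows that this mean is \<open>f'(1) = t\<close>.\<close>

no_notation Finite_Cartesian_Product.vec.vec_nth (infixl "$" 90)
no_notation Inner_Product.real_inner_class.inner (infix "\<bullet>" 70)

subsection \<open>The sesquilinear form of a matrix\<close>

text \<open>\<open>sesq M y x = y\<^sup>* M x\<close>; the quadratic form \<open>x\<^sup>* M x\<close> of the statement is \<open>sesq M x x\<close>.\<close>
definition sesq :: "complex mat \<Rightarrow> complex vec \<Rightarrow> complex vec \<Rightarrow> complex" where
  "sesq M y x = (M *\<^sub>v x) \<bullet>c y"

lemma sesq_sum:
  assumes "M \<in> carrier_mat n n" "x \<in> carrier_vec n" "y \<in> carrier_vec n"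
  shows "sesq M y x = (\<Sum>i<n. \<Sum>j<n. M $$ (i,j) * x $ j * cnj (y $ i))"
proof -
  have "sesq M y x = (\<Sum>i\<in>{0..<n}. (M *\<^sub>v x) $ i * cnj (y $ i))"
    using assms unfolding sesq_def scalar_prod_def by simp
  also have "\<dots> = (\<Sum>i<n. (\<Sum>j<n. M $$ (i,j) * x $ j) * cnj (y $ i))"
    using assms by (intro sum.cong) (auto simp: scalar_prod_def atLeast0LessThan)
  finally show ?thesis by (simp add: sum_distrib_right)
qed

lemma sesq_lincomb_vec:
  assumes M: "M \<in> carrier_mat n n" and x: "x \<in> carrier_vec n" and d: "d \<in> carrier_vec n"
  shows "sesq M (a \<cdot>\<^sub>v x + b \<cdot>\<^sub>v d) (c \<cdot>\<^sub>v x + e \<cdot>\<^sub>v d) =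
     cnj a * c * sesq M x x + cnj a * e * sesq M x d + cnj b * c * sesq M d x + cnj b * e * sesq M d d"
proof -
  have v: "a \<cdot>\<^sub>v x + b \<cdot>\<^sub>v d \<in> carrier_vec n" "c \<cdot>\<^sub>v x + e \<cdot>\<^sub>v d \<in> carrier_vec n"
    using x d by auto
  have "sesq M (a \<cdot>\<^sub>v x + b \<cdot>\<^sub>v d) (c \<cdot>\<^sub>v x + e \<cdot>\<^sub>v d) =
     (\<Sum>i<n. \<Sum>j<n. M $$ (i,j) * (c * x $ j + e * d $ j) * cnj (a * x $ i + b * d $ i))"
    unfolding sesq_sum[OF M v(2) v(1)] using x d by (intro sum.cong refl) auto
  also have "\<dots> =
     (\<Sum>i<n. \<Sum>j<n. cnj a * c * (M $$ (i,j) * x $ j * cnj (x $ i))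
      + cnj a * e * (M $$ (i,j) * d $ j * cnj (x $ i))
      + cnj b * c * (M $$ (i,j) * x $ j * cnj (d $ i))
      + cnj b * e * (M $$ (i,j) * d $ j * cnj (d $ i)))"
    by (intro sum.cong refl) (simp add: algebra_simps)
  finally show ?thesis
    unfolding sesq_sum[OF M x x] sesq_sum[OF M d x] sesq_sum[OF M x d] sesq_sum[OF M d d]
    by (simp add: sum.distrib sum_distrib_left)
qed

lemma sesq_lincomb_mat:
  assumes "M \<in> carrier_mat n n" "N \<in> carrier_mat n n" "x \<in> carrier_vec n" "y \<in> carrier_vec n"
  shows "sesq (a \<cdot>\<^sub>m M + b \<cdot>\<^sub>m N) y x = a * sesq M y x + b * sesq N y x"
proof -
  have c: "a \<cdot>\<^sub>m M + b \<cdot>\<^sub>m N \<in> carrier_mat n n" using assms by auto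
  show ?thesis
    unfolding sesq_sum[OF c assms(3,4)] sesq_sum[OF assms(1,3,4)] sesq_sum[OF assms(2,3,4)]
    using assms by (simp add: sum.distrib sum_distrib_left algebra_simps)
qed

lemma sesq_smult_mat:
  assumes "M \<in> carrier_mat n n" "x \<in> carrier_vec n" "y \<in> carrier_vec n"
  shows "sesq (c \<cdot>\<^sub>m M) y x = c * sesq M y x"
proof -
  have c: "c \<cdot>\<^sub>m M \<in> carrier_mat n n" using assms by auto
  show ?thesis unfolding sesq_sum[OF c assms(2,3)] sesq_sum[OF assms]
    using assms by (simp add: sum_distrib_left algebra_simps)
qed

lemma sesq_smult_vec:
  assumes "M \<in> carrier_mat n n" "x \<in> carrier_vec n" "y \<in> carrier_vec n"
  shows "sesq M (a \<cdot>\<^sub>v y) (c \<cdot>\<^sub>v x) = cnj a * c * sesq M y x"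
proof -
  have c: "a \<cdot>\<^sub>v y \<in> carrier_vec n" "c \<cdot>\<^sub>v x \<in> carrier_vec n" using assms by auto
  show ?thesis unfolding sesq_sum[OF assms(1) c(2) c(1)] sesq_sum[OF assms]
    using assms by (simp add: sum_distrib_left algebra_simps)
qed

lemma sesq_minus_mat:
  assumes "M \<in> carrier_mat n n" "N \<in> carrier_mat n n" "x \<in> carrier_vec n" "y \<in> carrier_vec n"
  shows "sesq (M - N) y x = sesq M y x - sesq N y x"
proof -
  have c: "M - N \<in> carrier_mat n n" using assms by auto
  show ?thesis
    unfolding sesq_sum[OF c assms(3,4)] sesq_sum[OF assms(1,3,4)] sesq_sum[OF assms(2,3,4)]
    using assms by (simp add: sum_subtractf algebra_simps)
qed

lemma sesq_arith_mean:
  assumes "M \<in> carrier_mat n n" "N \<in> carrier_mat n n" "x \<in> carrier_vec n" "y \<in> carrier_vec n"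
  shows "sesq (arith_mean s M N) y x = (1 - s) * sesq M y x + s * sesq N y x"
  unfolding arith_mean_def using sesq_lincomb_mat[OF assms] by simp

lemma cscalar_prod_swap:
  assumes "x \<in> carrier_vec n" "y \<in> carrier_vec n"
  shows "x \<bullet>c y = cnj (y \<bullet>c x)"
  using assms unfolding scalar_prod_def by (simp add: mult.commute)

lemma cscalar_prod_self:
  assumes "x \<in> carrier_vec n"
  shows "x \<bullet>c x = complex_of_real (\<Sum>i<n. (cmod (x $ i))\<^sup>2)"
  using assms unfolding scalar_prod_def
  by (simp add: atLeast0LessThan of_real_sum complex_norm_square del: of_real_power)

lemma sum_cmod_square_pos:
  assumes "x \<in> carrier_vec n" "x \<noteq> 0\<^sub>v n"
  shows "0 < (\<Sum>i<n. (cmod (x $ i))\<^sup>2)"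
proof -
  obtain i where i: "i < n" "x $ i \<noteq> 0"
    using assms by (metis eq_vecI carrier_vecD index_zero_vec)
  have "(cmod (x $ i))\<^sup>2 \<le> (\<Sum>i<n. (cmod (x $ i))\<^sup>2)"
    using i by (intro member_le_sum) auto
  moreover have "0 < (cmod (x $ i))\<^sup>2" using i by simp
  ultimately show ?thesis by linarith
qed

subsection \<open>Real parts and the Loewner order\<close>

lemma mat_adjoint_carrier: "M \<in> carrier_mat n n \<Longrightarrow> mat_adjoint M \<in> carrier_mat n n"
  unfolding mat_adjoint_def by auto

lemma mat_adjoint_index:
  "M \<in> carrier_mat n n \<Longrightarrow> i < n \<Longrightarrow> j < n \<Longrightarrow> mat_adjoint M $$ (i,j) = cnj (M $$ (j,i))"
  unfolding mat_adjoint_def by (simp add: mat_of_rows_index)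

lemma hermitian_mat_index:
  "M \<in> carrier_mat n n \<Longrightarrow> hermitian_mat M \<Longrightarrow> i < n \<Longrightarrow> j < n \<Longrightarrow> cnj (M $$ (j,i)) = M $$ (i,j)"
  unfolding hermitian_mat_def by (metis mat_adjoint_index)

lemma hermitian_matI:
  assumes M: "M \<in> carrier_mat n n" and H: "\<And>i j. i < n \<Longrightarrow> j < n \<Longrightarrow> cnj (M $$ (j,i)) = M $$ (i,j)"
  shows "hermitian_mat M"
proof -
  have "mat_adjoint M = M"
    by (rule eq_matI) (use M H mat_adjoint_carrier[OF M] mat_adjoint_index[OF M] in auto)
  then show ?thesis unfolding hermitian_mat_def using M by auto
qed

lemma re_mat_carrier:
  assumes "M \<in> carrier_mat n n"
  shows "re_mat M \<in> carrier_mat n n"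
  unfolding re_mat_def using mat_adjoint_carrier[OF assms] assms by auto

lemma re_mat_index:
  assumes M: "M \<in> carrier_mat n n" and ij: "i < n" "j < n"
  shows "re_mat M $$ (i,j) = (M $$ (i,j) + cnj (M $$ (j,i))) / 2"
  unfolding re_mat_def using mat_adjoint_carrier[OF M] mat_adjoint_index[OF M ij] M ij by auto

lemma hermitian_re_mat: "M \<in> carrier_mat n n \<Longrightarrow> hermitian_mat (re_mat M)"
  by (rule hermitian_matI[OF re_mat_carrier]) (auto simp: re_mat_index add.commute)

lemma hermitian_mat_smult_real:
  "M \<in> carrier_mat n n \<Longrightarrow> hermitian_mat M \<Longrightarrow> hermitian_mat (complex_of_real c \<cdot>\<^sub>m M)"
  by (rule hermitian_matI) (auto simp: hermitian_mat_index)

lemma hermitian_mat_minus: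
  "M \<in> carrier_mat n n \<Longrightarrow> N \<in> carrier_mat n n \<Longrightarrow> hermitian_mat M \<Longrightarrow> hermitian_mat N
    \<Longrightarrow> hermitian_mat (M - N)"
  by (rule hermitian_matI) (auto simp: hermitian_mat_index)

lemma sesq_re_mat:
  assumes M: "M \<in> carrier_mat n n" and x: "x \<in> carrier_vec n"
  shows "sesq (re_mat M) x x = complex_of_real (Re (sesq M x x))"
proof -
  have "sesq (re_mat M) x x = (\<Sum>i<n. \<Sum>j<n. (M $$ (i,j) + cnj (M $$ (j,i))) / 2 * x $ j * cnj (x $ i))"
    unfolding sesq_sum[OF re_mat_carrier[OF M] x x] by (intro sum.cong refl) (simp add: re_mat_index[OF M])
  also have "\<dots> = (sesq M x x + (\<Sum>i<n. \<Sum>j<n. cnj (M $$ (j,i)) * x $ j * cnj (x $ i))) / 2"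
    unfolding sesq_sum[OF M x x]
    by (simp add: sum.distrib add_divide_distrib algebra_simps sum_divide_distrib)
  also have "(\<Sum>i<n. \<Sum>j<n. cnj (M $$ (j,i)) * x $ j * cnj (x $ i)) = cnj (sesq M x x)"
    unfolding sesq_sum[OF M x x] by (subst sum.swap) (simp add: mult.commute mult.left_commute)
  finally show ?thesis by (simp add: complex_add_cnj)
qed

lemma smult_one_re_mat: "M \<in> carrier_mat n n \<Longrightarrow> complex_of_real 1 \<cdot>\<^sub>m re_mat M = re_mat M"
  using re_mat_carrier by (intro eq_matI) auto

lemma loewner_le_re_mat:
  assumes X: "X \<in> carrier_mat n n" and Y: "Y \<in> carrier_mat n n"
    and le: "\<And>x. x \<in> carrier_vec n \<Longrightarrow> a * Re (sesq X x x) \<le> b * Re (sesq Y x x)"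
  shows "loewner_le (complex_of_real a \<cdot>\<^sub>m re_mat X) (complex_of_real b \<cdot>\<^sub>m re_mat Y)"
proof -
  let ?P = "complex_of_real a \<cdot>\<^sub>m re_mat X" and ?Q = "complex_of_real b \<cdot>\<^sub>m re_mat Y"
  have rX: "re_mat X \<in> carrier_mat n n" and rY: "re_mat Y \<in> carrier_mat n n"
    using re_mat_carrier X Y by auto
  have P: "?P \<in> carrier_mat n n" and Q: "?Q \<in> carrier_mat n n" using rX rY by auto
  have H: "hermitian_mat (?Q - ?P)"
    using hermitian_mat_minus[OF Q P hermitian_mat_smult_real[OF rY hermitian_re_mat[OF Y]]
        hermitian_mat_smult_real[OF rX hermitian_re_mat[OF X]]] .
  have "pos_semidef_mat (?Q - ?P)"
    unfolding pos_semidef_mat_def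
  proof (rule conjI[OF H], intro ballI)
    fix x :: "complex vec" assume "x \<in> carrier_vec (dim_row (?Q - ?P))"
    then have x: "x \<in> carrier_vec n" using rX by simp
    have "sesq (?Q - ?P) x x = complex_of_real (b * Re (sesq Y x x) - a * Re (sesq X x x))"
      unfolding sesq_minus_mat[OF Q P x x] sesq_smult_mat[OF rY x x] sesq_smult_mat[OF rX x x]
        sesq_re_mat[OF Y x] sesq_re_mat[OF X x] by simp
    then show "Im (((?Q - ?P) *\<^sub>v x) \<bullet>c x) = 0 \<and> 0 \<le> Re (((?Q - ?P) *\<^sub>v x) \<bullet>c x)"
      using le[OF x] unfolding sesq_def by simp
  qed
  then show ?thesis unfolding loewner_le_def using rX rY by auto
qed

subsection \<open>Sectorial forms\<close>

definition sectorial :: "complex mat \<Rightarrow> nat \<Rightarrow> real \<Rightarrow> bool" where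
  "sectorial M n \<tau> \<longleftrightarrow>
     (\<forall>v\<in>carrier_vec n. \<bar>Im (sesq M v v)\<bar> \<le> \<tau> * Re (sesq M v v) \<and> 0 \<le> Re (sesq M v v))"

definition re_positive :: "complex mat \<Rightarrow> nat \<Rightarrow> bool" where
  "re_positive M n \<longleftrightarrow> (\<forall>v\<in>carrier_vec n. v \<noteq> 0\<^sub>v n \<longrightarrow> 0 < Re (sesq M v v))"

text \<open>The form \<open>Q a b\<close> below is the quadratic form of a matrix at \<open>a x + b d\<close>, with
  \<open>p = x\<^sup>*Mx\<close>, \<open>q = x\<^sup>*Md\<close>, \<open>r = d\<^sup>*Mx\<close>, \<open>s = d\<^sup>*Md\<close>; for \<open>\<tau> > 0\<close> the bound is read off at \<open>(a, b) = (\<plusminus>i\<tau>, 1)\<close>.\<close>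
lemma sector_cross_term_bound:
  fixes p q r s :: complex and \<tau> :: real
  defines "Q \<equiv> \<lambda>a b. cnj a * a * p + cnj a * b * q + cnj b * a * r + cnj b * b * s"
  assumes \<tau>: "0 \<le> \<tau>" and S: "\<And>a b. \<bar>Im (Q a b)\<bar> \<le> \<tau> * Re (Q a b) \<and> 0 \<le> Re (Q a b)"
  shows "\<bar>Re q - Re r\<bar> \<le> \<tau>\<^sup>2 * Re p + Re s"
proof (cases "\<tau> = 0")
  case True
  have "Im p = 0" "Im s = 0" "0 \<le> Re s" "Im (p + q + r + s) = 0" "Im (p + \<i> * q - \<i> * r + s) = 0"
    using S[of 1 0] S[of 0 1] S[of 1 1] S[of 1 \<i>] True by (simp_all add: Q_def algebra_simps)
  then show ?thesis using True by simp
next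
  case False
  then have \<tau>_pos: "0 < \<tau>" using \<tau> by simp
  have "Q (\<i> * \<tau>) 1 = \<tau>\<^sup>2 * p - \<i> * \<tau> * q + \<i> * \<tau> * r + s"
    "Q (- \<i> * \<tau>) 1 = \<tau>\<^sup>2 * p + \<i> * \<tau> * q - \<i> * \<tau> * r + s"
    by (simp_all add: Q_def algebra_simps power2_eq_square)
  then have "\<bar>Im (\<tau>\<^sup>2 * p - \<i> * \<tau> * q + \<i> * \<tau> * r + s)\<bar> \<le> \<tau> * Re (\<tau>\<^sup>2 * p - \<i> * \<tau> * q + \<i> * \<tau> * r + s)"
    "\<bar>Im (\<tau>\<^sup>2 * p + \<i> * \<tau> * q - \<i> * \<tau> * r + s)\<bar> \<le> \<tau> * Re (\<tau>\<^sup>2 * p + \<i> * \<tau> * q - \<i> * \<tau> * r + s)"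
    using S[of "\<i> * \<tau>" 1] S[of "- \<i> * \<tau>" 1] by auto
  then have "0 \<le> \<tau> * (\<tau>\<^sup>2 * Re p + Re s + Re r - Re q)" "0 \<le> \<tau> * (\<tau>\<^sup>2 * Re p + Re s + Re q - Re r)"
    by (simp_all add: abs_le_iff algebra_simps power2_eq_square power3_eq_cube)
  then show ?thesis using \<tau>_pos by (simp add: zero_le_mult_iff abs_le_iff)
qed

lemma sectorial_cross_bound:
  assumes M: "M \<in> carrier_mat n n" and \<tau>: "0 \<le> \<tau>" and S: "sectorial M n \<tau>"
    and x: "x \<in> carrier_vec n" and z: "z \<in> carrier_vec n"
  shows "2 * Re (sesq M z x) - Re (sesq M z z) \<le> (1 + \<tau>\<^sup>2) * Re (sesq M x x)"
proof -
  define d where "d = z - x"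
  have d: "d \<in> carrier_vec n" using x z d_def by auto
  note E = sesq_lincomb_vec[OF M x d]
  have "\<bar>Re (sesq M x d) - Re (sesq M d x)\<bar> \<le> \<tau>\<^sup>2 * Re (sesq M x x) + Re (sesq M d d)"
  proof (rule sector_cross_term_bound[OF \<tau>])
    fix a b :: complex
    have "a \<cdot>\<^sub>v x + b \<cdot>\<^sub>v d \<in> carrier_vec n" using x d by auto
    then show "\<bar>Im (cnj a * a * sesq M x x + cnj a * b * sesq M x d + cnj b * a * sesq M d x + cnj b * b * sesq M d d)\<bar>
      \<le> \<tau> * Re (cnj a * a * sesq M x x + cnj a * b * sesq M x d + cnj b * a * sesq M d x + cnj b * b * sesq M d d)
      \<and> 0 \<le> Re (cnj a * a * sesq M x x + cnj a * b * sesq M x d + cnj b * a * sesq M d x + cnj b * b * sesq M d d)"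
      using S unfolding sectorial_def E[symmetric] by blast
  qed
  moreover have "z = 1 \<cdot>\<^sub>v x + 1 \<cdot>\<^sub>v d" "x = 1 \<cdot>\<^sub>v x + 0 \<cdot>\<^sub>v d" using x z d by (auto simp: d_def)
  then have "sesq M z x = sesq M x x + sesq M d x"
    "sesq M z z = sesq M x x + sesq M x d + sesq M d x + sesq M d d"
    using E[of 1 1 1 0] E[of 1 1 1 1] by simp_all
  ultimately show ?thesis by (simp add: algebra_simps abs_le_iff)
qed

lemma sesq_in_sector_of_num_range:
  assumes A: "A \<in> carrier_mat n n" and R: "num_range A \<subseteq> sector \<alpha>"
    and v: "v \<in> carrier_vec n" "v \<noteq> 0\<^sub>v n"
  shows "\<bar>Im (sesq A v v)\<bar> \<le> tan \<alpha> * Re (sesq A v v) \<and> 0 < Re (sesq A v v)"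
proof -
  define N where "N = (\<Sum>i<n. (cmod (v $ i))\<^sup>2)"
  have N: "0 < N" using sum_cmod_square_pos[OF v] N_def by simp
  define u where "u = complex_of_real (1 / sqrt N) \<cdot>\<^sub>v v"
  have u: "u \<in> carrier_vec n" using v u_def by auto
  have scale: "sesq M u u = complex_of_real (1 / N) * sesq M v v" if "M \<in> carrier_mat n n" for M
    unfolding u_def sesq_smult_vec[OF that v(1) v(1)] using N
    by (simp add: field_simps flip: of_real_mult)
  have "u \<bullet>c u = complex_of_real (1 / N) * (v \<bullet>c v)"
    using scale[of "1\<^sub>m n"] u v by (simp add: sesq_def)
  then have "u \<bullet>c u = 1" using N unfolding cscalar_prod_self[OF v(1)] N_def[symmetric]
    by (simp flip: of_real_mult)
  then have "sesq A u u \<in> sector \<alpha>" using R A u unfolding num_range_def sesq_def by auto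
  with N show ?thesis unfolding scale[OF A] sector_def
    by (auto simp: abs_div divide_less_cancel divide_le_cancel field_simps)
qed

lemma sectorial_of_num_range:
  assumes "A \<in> carrier_mat n n" "num_range A \<subseteq> sector \<alpha>"
  shows "sectorial A n (tan \<alpha>)"
  unfolding sectorial_def
proof
  fix v :: "complex vec" assume v: "v \<in> carrier_vec n"
  show "\<bar>Im (sesq A v v)\<bar> \<le> tan \<alpha> * Re (sesq A v v) \<and> 0 \<le> Re (sesq A v v)"
  proof (cases "v = 0\<^sub>v n")
    case True then show ?thesis using assms(1) by (simp add: sesq_def)
  next
    case False then show ?thesis using sesq_in_sector_of_num_range[OF assms v] by auto
  qed
qed

lemma re_positive_of_num_range:
  "A \<in> carrier_mat n n \<Longrightarrow> num_range A \<subseteq> sector \<alpha> \<Longrightarrow> re_positive A n"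
  unfolding re_positive_def using sesq_in_sector_of_num_range by blast

lemma sectorial_arith_mean:
  assumes M: "M \<in> carrier_mat n n" and N: "N \<in> carrier_mat n n"
    and SM: "sectorial M n \<tau>" and SN: "sectorial N n \<tau>" and s: "0 \<le> s" "s \<le> 1"
  shows "sectorial (arith_mean s M N) n \<tau>"
  unfolding sectorial_def
proof
  fix v :: "complex vec" assume v: "v \<in> carrier_vec n"
  have a: "\<bar>Im (sesq M v v)\<bar> \<le> \<tau> * Re (sesq M v v)" "0 \<le> Re (sesq M v v)"
    "\<bar>Im (sesq N v v)\<bar> \<le> \<tau> * Re (sesq N v v)" "0 \<le> Re (sesq N v v)"
    using SM SN v unfolding sectorial_def by auto
  have "(1 - s) * \<bar>Im (sesq M v v)\<bar> \<le> (1 - s) * (\<tau> * Re (sesq M v v))"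
    "s * \<bar>Im (sesq N v v)\<bar> \<le> s * (\<tau> * Re (sesq N v v))"
    using a s by (auto intro: mult_left_mono)
  moreover have "0 \<le> (1 - s) * Re (sesq M v v)" "0 \<le> s * Re (sesq N v v)"
    using a s by auto
  moreover have "\<bar>(1 - s) * Im (sesq M v v) + s * Im (sesq N v v)\<bar>
      \<le> (1 - s) * \<bar>Im (sesq M v v)\<bar> + s * \<bar>Im (sesq N v v)\<bar>"
    using s by (metis abs_mult abs_of_nonneg abs_triangle_ineq diff_ge_0_iff_ge)
  moreover have "Im (sesq (arith_mean s M N) v v) = (1 - s) * Im (sesq M v v) + s * Im (sesq N v v)"
    "Re (sesq (arith_mean s M N) v v) = (1 - s) * Re (sesq M v v) + s * Re (sesq N v v)"
    "\<tau> * ((1 - s) * Re (sesq M v v) + s * Re (sesq N v v))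
      = (1 - s) * (\<tau> * Re (sesq M v v)) + s * (\<tau> * Re (sesq N v v))"
    unfolding sesq_arith_mean[OF M N v v] by (simp_all add: algebra_simps)
  ultimately show "\<bar>Im (sesq (arith_mean s M N) v v)\<bar> \<le> \<tau> * Re (sesq (arith_mean s M N) v v)
      \<and> 0 \<le> Re (sesq (arith_mean s M N) v v)"
    by (simp only:) linarith
qed

lemma re_positive_arith_mean:
  assumes M: "M \<in> carrier_mat n n" and N: "N \<in> carrier_mat n n"
    and PM: "re_positive M n" and PN: "re_positive N n" and s: "0 \<le> s" "s \<le> 1"
  shows "re_positive (arith_mean s M N) n"
  unfolding re_positive_def
proof (intro ballI impI)
  fix v :: "complex vec" assume v: "v \<in> carrier_vec n" "v \<noteq> 0\<^sub>v n"
  have "0 < Re (sesq M v v)" "0 < Re (sesq N v v)" using PM PN v unfolding re_positive_def by auto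
  then have "0 < (1 - s) * Re (sesq M v v) + s * Re (sesq N v v)"
    using s by (cases "s = 0") (auto intro: add_nonneg_pos add_pos_nonneg)
  then show "0 < Re (sesq (arith_mean s M N) v v)" unfolding sesq_arith_mean[OF M N v(1) v(1)] by simp
qed

lemma minv_of_det_nonzero:
  assumes M: "M \<in> carrier_mat n n" and dM: "det M \<noteq> 0"
  shows "minv M \<in> carrier_mat n n" "M * minv M = 1\<^sub>m n" "minv M * M = 1\<^sub>m n"
    "minv M = inverse (det M) \<cdot>\<^sub>m adj_mat M"
proof -
  define K where "K = inverse (det M) \<cdot>\<^sub>m adj_mat M"
  have K: "K \<in> carrier_mat n n" using adj_mat(1)[OF M] K_def by auto
  have one: "inverse (det M) \<cdot>\<^sub>m (det M \<cdot>\<^sub>m 1\<^sub>m n) = (1\<^sub>m n :: complex mat)"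
    using dM by (intro eq_matI) auto
  have MK: "M * K = 1\<^sub>m n" unfolding K_def
    using mult_smult_distrib[OF M adj_mat(1)[OF M]] adj_mat(2)[OF M] one by simp
  have KM: "K * M = 1\<^sub>m n" unfolding K_def
    using mult_smult_assoc_mat[OF adj_mat(1)[OF M] M] adj_mat(3)[OF M] one by simp
  have ex: "\<exists>B. B \<in> carrier_mat (dim_row M) (dim_row M) \<and> M * B = 1\<^sub>m (dim_row M) \<and> B * M = 1\<^sub>m (dim_row M)"
    using K MK KM M by auto
  have mi: "minv M \<in> carrier_mat n n \<and> M * minv M = 1\<^sub>m n \<and> minv M * M = 1\<^sub>m n"
    using someI_ex[OF ex] M unfolding minv_def by auto
  then show "minv M \<in> carrier_mat n n" "M * minv M = 1\<^sub>m n" "minv M * M = 1\<^sub>m n" by auto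
  have "minv M = minv M * (M * K)" using MK mi by (metis right_mult_one_mat)
  also have "\<dots> = (minv M * M) * K" using assoc_mult_mat[OF _ M K, of "minv M" n] mi by simp
  also have "\<dots> = K" using mi K by simp
  finally show "minv M = inverse (det M) \<cdot>\<^sub>m adj_mat M" unfolding K_def .
qed

lemma mult_minv_mult_vec:
  assumes M: "M \<in> carrier_mat n n" and "det M \<noteq> 0" and v: "v \<in> carrier_vec n"
  shows "M *\<^sub>v (minv M *\<^sub>v v) = v"
  using assoc_mult_mat_vec[OF M minv_of_det_nonzero(1)[OF assms(1,2)] v]
    minv_of_det_nonzero(2)[OF assms(1,2)] v by simp

lemma minv_minv:
  assumes M: "M \<in> carrier_mat n n" and dM: "det M \<noteq> 0"
  shows "minv (minv M) = M"
proof -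
  note K = minv_of_det_nonzero[OF M dM]
  have "det (minv M) * det M = 1" using det_mult[OF K(1) M] K(3) by simp
  then have dK: "det (minv M) \<noteq> 0" by auto
  note KK = minv_of_det_nonzero[OF K(1) dK]
  have "minv (minv M) = minv (minv M) * (minv M * M)" using K(3) KK(1) by (metis right_mult_one_mat)
  also have "\<dots> = (minv (minv M) * minv M) * M" using assoc_mult_mat[OF KK(1) K(1) M] by simp
  also have "\<dots> = M" using KK(3) M by simp
  finally show ?thesis .
qed

lemma det_nonzero_of_re_positive:
  assumes M: "M \<in> carrier_mat n n" and P: "re_positive M n"
  shows "det M \<noteq> 0"
proof
  assume "det M = 0"
  then obtain v where v: "v \<in> carrier_vec n" "v \<noteq> 0\<^sub>v n" "M *\<^sub>v v = 0\<^sub>v n"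
    using det_0_iff_vec_prod_zero[OF M] by auto
  then have "sesq M v v = 0" unfolding sesq_def by simp
  then show False using P v unfolding re_positive_def by force
qed

lemma sesq_minv_self:
  assumes M: "M \<in> carrier_mat n n" and "det M \<noteq> 0" and v: "v \<in> carrier_vec n"
  shows "sesq (minv M) v v = cnj (sesq M (minv M *\<^sub>v v) (minv M *\<^sub>v v))"
proof -
  have u: "minv M *\<^sub>v v \<in> carrier_vec n" using minv_of_det_nonzero(1)[OF assms(1,2)] v by auto
  show ?thesis unfolding sesq_def mult_minv_mult_vec[OF assms]
    using cscalar_prod_swap[OF u v] by simp
qed

lemma minv_sectorial_re_positive:
  assumes M: "M \<in> carrier_mat n n" and P: "re_positive M n" and S: "sectorial M n \<tau>"
  shows "sectorial (minv M) n \<tau>" "re_positive (minv M) n"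
proof -
  note dM = det_nonzero_of_re_positive[OF M P]
  have zero: "M *\<^sub>v 0\<^sub>v n = 0\<^sub>v n" by (rule eq_vecI) (use M in auto)
  have u: "minv M *\<^sub>v v \<in> carrier_vec n" "v \<noteq> 0\<^sub>v n \<Longrightarrow> minv M *\<^sub>v v \<noteq> 0\<^sub>v n"
    if "v \<in> carrier_vec n" for v
    using minv_of_det_nonzero(1)[OF M dM] that mult_minv_mult_vec[OF M dM that] zero by auto
  show "sectorial (minv M) n \<tau>"
    unfolding sectorial_def
  proof
    fix v :: "complex vec" assume v: "v \<in> carrier_vec n"
    show "\<bar>Im (sesq (minv M) v v)\<bar> \<le> \<tau> * Re (sesq (minv M) v v) \<and> 0 \<le> Re (sesq (minv M) v v)"
      using S u(1)[OF v] unfolding sesq_minv_self[OF M dM v] sectorial_def by auto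
  qed
  show "re_positive (minv M) n"
    unfolding re_positive_def
  proof (intro ballI impI)
    fix v :: "complex vec" assume v: "v \<in> carrier_vec n" "v \<noteq> 0\<^sub>v n"
    show "0 < Re (sesq (minv M) v v)"
      using P u[OF v(1)] v(2) unfolding sesq_minv_self[OF M dM v(1)] re_positive_def by auto
  qed
qed

lemma re_sesq_minv_eq:
  assumes M: "M \<in> carrier_mat n n" and "det M \<noteq> 0" and x: "x \<in> carrier_vec n"
  defines "y \<equiv> minv M *\<^sub>v x"
  shows "Re (sesq (minv M) x x) = 2 * Re (x \<bullet>c y) - Re (sesq M y y)"
proof -
  have y: "y \<in> carrier_vec n" using minv_of_det_nonzero(1)[OF assms(1,2)] x y_def by auto
  have "sesq M y y = x \<bullet>c y" unfolding sesq_def y_def mult_minv_mult_vec[OF assms(1-3)] ..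
  moreover have "sesq (minv M) x x = cnj (x \<bullet>c y)"
    unfolding sesq_def y_def[symmetric] using cscalar_prod_swap[OF y x] by simp
  ultimately show ?thesis by simp
qed

lemma sectorial_variational_bound:
  assumes N: "N \<in> carrier_mat n n" and \<tau>: "0 \<le> \<tau>"
    and P: "re_positive N n" and S: "sectorial N n \<tau>"
    and x: "x \<in> carrier_vec n" and w: "w \<in> carrier_vec n"
  shows "2 * Re (x \<bullet>c w) - Re (sesq N w w) \<le> (1 + \<tau>\<^sup>2) * Re (sesq (minv N) x x)"
proof -
  note dN = det_nonzero_of_re_positive[OF N P]
  define z where "z = minv N *\<^sub>v x"
  have z: "z \<in> carrier_vec n" using minv_of_det_nonzero(1)[OF N dN] x z_def by auto
  have Nz: "N *\<^sub>v z = x" unfolding z_def using mult_minv_mult_vec[OF N dN x] .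
  have "sesq N w z = x \<bullet>c w" unfolding sesq_def Nz ..
  moreover have "Re (sesq N z z) = Re (sesq (minv N) x x)"
    unfolding sesq_minv_self[OF N dN x] z_def[symmetric] by simp
  ultimately show ?thesis using sectorial_cross_bound[OF N \<tau> S z w] by simp
qed

lemma sectorial_variational_bound_minv:
  assumes M: "M \<in> carrier_mat n n" and \<tau>: "0 \<le> \<tau>"
    and P: "re_positive M n" and S: "sectorial M n \<tau>"
    and x: "x \<in> carrier_vec n" and w: "w \<in> carrier_vec n"
  shows "2 * Re (x \<bullet>c w) - Re (sesq (minv M) w w) \<le> (1 + \<tau>\<^sup>2) * Re (sesq M x x)"
proof -
  note dM = det_nonzero_of_re_positive[OF M P]
  note M' = minv_sectorial_re_positive[OF M P S]
  show ?thesis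
    using sectorial_variational_bound[OF minv_of_det_nonzero(1)[OF M dM] \<tau> M'(2,1) x w]
    unfolding minv_minv[OF M dM] .
qed

subsection \<open>Bounds on the weighted harmonic mean\<close>

locale sectorial_pair =
  fixes A B :: "complex mat" and n :: nat and \<tau> :: real
  assumes A: "A \<in> carrier_mat n n" and B: "B \<in> carrier_mat n n"
    and re_positive_A: "re_positive A n" and re_positive_B: "re_positive B n"
    and sectorial_A: "sectorial A n \<tau>" and sectorial_B: "sectorial B n \<tau>"
    and \<tau>: "0 \<le> \<tau>"
begin

abbreviation inv_mean :: "real \<Rightarrow> complex mat" where
  "inv_mean s \<equiv> arith_mean s (minv A) (minv B)"

lemma minv_A: "minv A \<in> carrier_mat n n" and minv_B: "minv B \<in> carrier_mat n n"
  using minv_of_det_nonzero(1)[OF A det_nonzero_of_re_positive[OF A re_positive_A]]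
    minv_of_det_nonzero(1)[OF B det_nonzero_of_re_positive[OF B re_positive_B]] .

lemma inv_mean_carrier: "inv_mean s \<in> carrier_mat n n"
  unfolding arith_mean_def using minv_A minv_B by auto

lemma harm_mean_eq: "harm_mean s A B = minv (inv_mean s)"
  unfolding harm_mean_def arith_mean_def ..

lemma inv_mean_sectorial:
  assumes "0 \<le> s" "s \<le> 1"
  shows "re_positive (inv_mean s) n" "sectorial (inv_mean s) n \<tau>"
proof -
  note A' = minv_sectorial_re_positive[OF A re_positive_A sectorial_A]
  note B' = minv_sectorial_re_positive[OF B re_positive_B sectorial_B]
  show "re_positive (inv_mean s) n" by (rule re_positive_arith_mean[OF minv_A minv_B A'(2) B'(2) assms])
  show "sectorial (inv_mean s) n \<tau>" by (rule sectorial_arith_mean[OF minv_A minv_B A'(1) B'(1) assms])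
qed

lemma det_inv_mean: "0 \<le> s \<Longrightarrow> s \<le> 1 \<Longrightarrow> det (inv_mean s) \<noteq> 0"
  by (rule det_nonzero_of_re_positive[OF inv_mean_carrier inv_mean_sectorial(1)])

lemma harm_mean_carrier: "0 \<le> s \<Longrightarrow> s \<le> 1 \<Longrightarrow> harm_mean s A B \<in> carrier_mat n n"
  unfolding harm_mean_eq using minv_of_det_nonzero(1)[OF inv_mean_carrier det_inv_mean] .

lemma re_sesq_harm_mean_le:
  assumes s: "0 \<le> s" "s \<le> 1" and x: "x \<in> carrier_vec n"
  shows "Re (sesq (harm_mean s A B) x x) \<le> (1 + \<tau>\<^sup>2) * Re (sesq (arith_mean s A B) x x)"
proof -
  define w where "w = harm_mean s A B *\<^sub>v x"
  have w: "w \<in> carrier_vec n" using harm_mean_carrier[OF s] x w_def by auto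
  have w_eq: "w = minv (inv_mean s) *\<^sub>v x" unfolding w_def harm_mean_eq ..
  have "Re (sesq (harm_mean s A B) x x) = 2 * Re (x \<bullet>c w) - Re (sesq (inv_mean s) w w)"
    unfolding harm_mean_eq w_eq by (rule re_sesq_minv_eq[OF inv_mean_carrier det_inv_mean[OF s] x])
  also have "\<dots> = (1 - s) * (2 * Re (x \<bullet>c w) - Re (sesq (minv A) w w))
      + s * (2 * Re (x \<bullet>c w) - Re (sesq (minv B) w w))"
    unfolding sesq_arith_mean[OF minv_A minv_B w w] by (simp add: algebra_simps)
  also have "\<dots> \<le> (1 - s) * ((1 + \<tau>\<^sup>2) * Re (sesq A x x)) + s * ((1 + \<tau>\<^sup>2) * Re (sesq B x x))"
    using sectorial_variational_bound_minv[OF A \<tau> re_positive_A sectorial_A x w]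
      sectorial_variational_bound_minv[OF B \<tau> re_positive_B sectorial_B x w] s
    by (intro add_mono mult_left_mono) auto
  finally show ?thesis unfolding sesq_arith_mean[OF A B x x] by (simp add: algebra_simps)
qed

lemma re_sesq_harm_mean_ge:
  assumes s: "0 \<le> s" "s \<le> 1" and x: "x \<in> carrier_vec n" and y: "y \<in> carrier_vec n"
  shows "2 * Re (x \<bullet>c y) - ((1 - s) * Re (sesq (minv A) y y) + s * Re (sesq (minv B) y y))
      \<le> (1 + \<tau>\<^sup>2) * Re (sesq (harm_mean s A B) x x)"
  using sectorial_variational_bound[OF inv_mean_carrier \<tau> inv_mean_sectorial[OF s] x y]
  unfolding harm_mean_eq sesq_arith_mean[OF minv_A minv_B y y] by simp

lemma re_sesq_harm_mean_eq:
  assumes t: "0 \<le> t" "t \<le> 1" and x: "x \<in> carrier_vec n"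
  defines "y \<equiv> harm_mean t A B *\<^sub>v x"
  shows "Re (sesq (harm_mean t A B) x x)
      = 2 * Re (x \<bullet>c y) - ((1 - t) * Re (sesq (minv A) y y) + t * Re (sesq (minv B) y y))"
    and "y \<in> carrier_vec n"
proof -
  show y: "y \<in> carrier_vec n" using harm_mean_carrier[OF t] x y_def by auto
  have "Re (sesq (harm_mean t A B) x x) = 2 * Re (x \<bullet>c y) - Re (sesq (inv_mean t) y y)"
    unfolding y_def harm_mean_eq by (rule re_sesq_minv_eq[OF inv_mean_carrier det_inv_mean[OF t] x])
  then show "Re (sesq (harm_mean t A B) x x)
      = 2 * Re (x \<bullet>c y) - ((1 - t) * Re (sesq (minv A) y y) + t * Re (sesq (minv B) y y))"
    using sesq_arith_mean[OF minv_A minv_B y y, of t] by simp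
qed

end

subsection \<open>Probability measures on the unit interval\<close>

locale unit_interval_prob = prob_space \<nu> for \<nu> :: "real measure" +
  assumes sets_eq: "sets \<nu> = sets (restrict_space borel {0..1::real})"
begin

lemma space_eq: "space \<nu> = {0..1}"
  using sets_eq_imp_space_eq[OF sets_eq] by simp

lemma borel_measurable_continuous:
  fixes g :: "real \<Rightarrow> 'a::topological_space"
  assumes "continuous_on {0..1} g"
  shows "g \<in> borel_measurable \<nu>"
proof -
  have "\<nu> \<rightarrow>\<^sub>M (borel :: 'a measure) = restrict_space borel {0..1} \<rightarrow>\<^sub>M borel"
    by (rule measurable_cong_sets[OF sets_eq]) simp
  then show ?thesis using borel_measurable_continuous_on_restrict[OF assms] by simp
qed

lemma integrable_continuous:
  fixes g :: "real \<Rightarrow> 'a::{banach, second_countable_topology}"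
  assumes g: "continuous_on {0..1} g"
  shows "integrable \<nu> g"
proof -
  obtain K where K: "\<forall>y\<in>g ` {0..1}. norm y \<le> K"
    using compact_imp_bounded[OF compact_continuous_image[OF g compact_Icc]] bounded_iff by metis
  have "AE s in \<nu>. norm (g s) \<le> K" using K space_eq by (intro AE_I2) auto
  then show ?thesis by (rule integrable_const_bound[OF _ borel_measurable_continuous[OF g]])
qed

lemma integral_mono_continuous:
  fixes g h :: "real \<Rightarrow> real"
  assumes "continuous_on {0..1} g" "continuous_on {0..1} h"
    and "\<And>s. 0 \<le> s \<Longrightarrow> s \<le> 1 \<Longrightarrow> g s \<le> h s"
  shows "(\<integral>s. g s \<partial>\<nu>) \<le> (\<integral>s. h s \<partial>\<nu>)"
  by (rule integral_mono[OF integrable_continuous integrable_continuous]) (use assms space_eq in auto)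

lemma integral_affine: "(\<integral>s. c0 + c1 * s \<partial>\<nu>) = c0 + c1 * (\<integral>s. s \<partial>\<nu>)"
proof -
  have "integrable \<nu> (\<lambda>s::real. c0)" "integrable \<nu> (\<lambda>s::real. c1 * s)"
    by (intro integrable_continuous continuous_intros)+
  then show ?thesis by (simp add: Bochner_Integration.integral_add prob_space)
qed

end

lemma kernel_denominator_pos:
  fixes x s :: real
  assumes "0 < x" "0 \<le> s" "s \<le> 1"
  shows "0 < (1 - s) * x + s"
proof (cases "s = 1")
  case False
  then have "0 < (1 - s) * x" using assms by simp
  then show ?thesis using assms by linarith
qed simp

lemma kernel_eq:
  fixes x s :: real
  assumes "0 < x" "0 \<le> s" "s \<le> 1"
  shows "inverse ((1 - s) + s * inverse x) = x / ((1 - s) * x + s)"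
  using kernel_denominator_pos[OF assms] assms(1) by (simp add: field_simps)

lemma kernel_difference_quotient:
  fixes x s :: real
  assumes x: "0 < x" "x \<noteq> 1" and s: "0 \<le> s" "s \<le> 1"
  shows "(inverse ((1 - s) + s * inverse x) - 1) / (x - 1) = s / ((1 - s) * x + s)"
proof -
  have D: "0 < (1 - s) * x + s" using kernel_denominator_pos[OF x(1) s] .
  have "x / ((1 - s) * x + s) - 1 = s * (x - 1) / ((1 - s) * x + s)"
    using D by (simp add: field_simps)
  then show ?thesis unfolding kernel_eq[OF x(1) s] using x D by simp
qed

lemma kernel_quotient_near_one:
  fixes x s :: real
  assumes x: "1/2 \<le> x" and s: "0 \<le> s" "s \<le> 1"
  shows "\<bar>s / ((1 - s) * x + s) - s\<bar> \<le> 2 * \<bar>x - 1\<bar>"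
proof -
  have D: "1/2 \<le> (1 - s) * x + s"
  proof -
    have "(1 - s) * (1/2) + s * (1/2) \<le> (1 - s) * x + s"
      using x s by (intro add_mono mult_left_mono) auto
    then show ?thesis by (simp add: field_simps)
  qed
  have "s / ((1 - s) * x + s) - s = s * (1 - s) * (1 - x) / ((1 - s) * x + s)"
    using D by (simp add: field_simps)
  also have "\<bar>\<dots>\<bar> = s * (1 - s) * \<bar>1 - x\<bar> / ((1 - s) * x + s)"
    using D s by (simp add: abs_mult abs_div)
  also have "\<dots> \<le> s * (1 - s) * \<bar>1 - x\<bar> / (1/2)"
    using D s by (intro divide_left_mono) auto
  also have "\<dots> \<le> 1 * 1 * \<bar>1 - x\<bar> / (1/2)"
    using s by (intro divide_right_mono mult_right_mono mult_mono) auto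
  finally show ?thesis by (simp add: abs_minus_commute)
qed

context unit_interval_prob
begin

lemma difference_quotient_integral:
  assumes R: "\<forall>x>0. f x = (\<integral>s. inverse ((1 - s) + s * inverse x) \<partial>\<nu>)"
    and x: "0 < x" "x \<noteq> 1"
  shows "(f x - f 1) / (x - 1) = (\<integral>s. s / ((1 - s) * x + s) \<partial>\<nu>)"
proof -
  have "continuous_on {0..1} (\<lambda>s. x / ((1 - s) * x + s))"
    using kernel_denominator_pos[OF x(1)] by (intro continuous_intros) force
  then have "continuous_on {0..1} (\<lambda>s. inverse ((1 - s) + s * inverse x))"
    by (rule continuous_on_eq) (simp add: kernel_eq[OF x(1)])
  then have int: "integrable \<nu> (\<lambda>s. inverse ((1 - s) + s * inverse x))"
    by (rule integrable_continuous)
  have "f 1 = (\<integral>s. 1 \<partial>\<nu>)" using R by simp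
  then have "f x - f 1 = (\<integral>s. inverse ((1 - s) + s * inverse x) - 1 \<partial>\<nu>)"
    using R x by (simp add: Bochner_Integration.integral_diff[OF int])
  then have "(f x - f 1) / (x - 1) = (\<integral>s. (inverse ((1 - s) + s * inverse x) - 1) / (x - 1) \<partial>\<nu>)"
    by simp
  also have "\<dots> = (\<integral>s. s / ((1 - s) * x + s) \<partial>\<nu>)"
    using kernel_difference_quotient[OF x] space_eq by (intro Bochner_Integration.integral_cong) auto
  finally show ?thesis .
qed

lemma difference_quotient_mean_bound:
  assumes R: "\<forall>x>0. f x = (\<integral>s. inverse ((1 - s) + s * inverse x) \<partial>\<nu>)"
    and x: "1/2 < x" "x \<noteq> 1"
  shows "\<bar>(f x - f 1) / (x - 1) - (\<integral>s. s \<partial>\<nu>)\<bar> \<le> 2 * \<bar>x - 1\<bar>"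
proof -
  have g: "continuous_on {0..1} (\<lambda>s. s / ((1 - s) * x + s))"
    using kernel_denominator_pos[of x] x by (intro continuous_intros) force
  have "(f x - f 1) / (x - 1) = (\<integral>s. s / ((1 - s) * x + s) \<partial>\<nu>)"
    using difference_quotient_integral[OF R] x by simp
  then have "(f x - f 1) / (x - 1) - (\<integral>s. s \<partial>\<nu>) = (\<integral>s. s / ((1 - s) * x + s) - s \<partial>\<nu>)"
    by (simp add: Bochner_Integration.integral_diff[OF integrable_continuous[OF g]
        integrable_continuous[OF continuous_on_id]])
  also have "\<bar>\<dots>\<bar> \<le> (\<integral>s. 2 * \<bar>x - 1\<bar> \<partial>\<nu>)"
  proof (rule integral_abs_bound_integral)
    show "integrable \<nu> (\<lambda>s. s / ((1 - s) * x + s) - s)"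
      by (intro integrable_continuous continuous_on_diff g continuous_on_id)
    show "\<bar>s / ((1 - s) * x + s) - s\<bar> \<le> 2 * \<bar>x - 1\<bar>" if "s \<in> space \<nu>" for s
      using kernel_quotient_near_one[of x s] x that space_eq by auto
  qed simp
  finally show ?thesis by (simp add: prob_space)
qed

lemma mean_eq_derivative:
  assumes R: "\<forall>x>0. f x = (\<integral>s. inverse ((1 - s) + s * inverse x) \<partial>\<nu>)"
    and D: "(f has_real_derivative t) (at 1)"
  shows "(\<integral>s. s \<partial>\<nu>) = t"
proof -
  define m where "m = (\<integral>s. s \<partial>\<nu>)"
  have "\<forall>\<^sub>F x in at (1::real). 1/2 < x \<and> x \<noteq> 1"
    unfolding eventually_at by (rule exI[of _ "1/2"]) (auto simp: dist_real_def abs_if split: if_splits)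
  then have ev: "\<forall>\<^sub>F x in at 1. norm ((f x - f 1) / (x - 1) - m) \<le> 2 * \<bar>x - 1\<bar>"
    by eventually_elim (use difference_quotient_mean_bound[OF R] in \<open>auto simp: m_def\<close>)
  have "((\<lambda>x. 2 * \<bar>x - 1\<bar>) \<longlongrightarrow> 2 * \<bar>1 - 1\<bar>) (at (1::real))"
    by (intro tendsto_intros)
  then have "((\<lambda>x. (f x - f 1) / (x - 1) - m) \<longlongrightarrow> 0) (at 1)"
    using Lim_null_comparison[OF ev] by simp
  then have "((\<lambda>x. (f x - f 1) / (x - 1)) \<longlongrightarrow> m) (at 1)"
    by (simp add: LIM_zero_iff)
  moreover have "((\<lambda>x. (f x - f 1) / (x - 1)) \<longlongrightarrow> t) (at 1)"
    using D unfolding has_field_derivative_iff .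
  ultimately show ?thesis unfolding m_def using tendsto_unique[of "at (1::real)"] by simp
qed

end

subsection \<open>Continuity of the harmonic mean in the weight\<close>

lemma continuous_on_det:
  assumes C: "\<And>s. M s \<in> carrier_mat n n"
    and E: "\<And>i j. i < n \<Longrightarrow> j < n \<Longrightarrow> continuous_on S (\<lambda>s. M s $$ (i,j))"
  shows "continuous_on S (\<lambda>s. det (M s) :: complex)"
proof -
  have eq: "(\<lambda>s. det (M s)) =
      (\<lambda>s. \<Sum>p \<in> {p. p permutes {0..<n}}. signof p * (\<Prod>i = 0..<n. M s $$ (i, p i)))"
    using det_def'[OF C] by auto
  show ?thesis unfolding eq
  proof (intro continuous_on_sum continuous_on_mult continuous_on_const continuous_on_prod)
    fix p i assume p: "p \<in> {p. p permutes {0..<n}}" and i: "i \<in> {0..<n}"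
    then have "p i < n" using permutes_in_image[of p "{0..<n}" i] by auto
    then show "continuous_on S (\<lambda>s. M s $$ (i, p i))" using E i by auto
  qed
qed

lemma continuous_on_cofactor:
  assumes C: "\<And>s. M s \<in> carrier_mat n n"
    and E: "\<And>i j. i < n \<Longrightarrow> j < n \<Longrightarrow> continuous_on S (\<lambda>s. M s $$ (i,j))"
    and ij: "i < n" "j < n"
  shows "continuous_on S (\<lambda>s. cofactor (M s) i j :: complex)"
proof -
  have C': "\<And>s. mat_delete (M s) i j \<in> carrier_mat (n - 1) (n - 1)"
    using mat_delete_carrier C by blast
  have E': "continuous_on S (\<lambda>s. mat_delete (M s) i j $$ (a,b))" if ab: "a < n - 1" "b < n - 1" for a b
  proof -
    have eq: "(\<lambda>s. mat_delete (M s) i j $$ (a,b))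
        = (\<lambda>s. M s $$ (if a < i then a else Suc a, if b < j then b else Suc b))"
    proof
      fix s
      have "dim_row (M s) = n" "dim_col (M s) = n" using C[of s] by auto
      then show "mat_delete (M s) i j $$ (a,b) = M s $$ (if a < i then a else Suc a, if b < j then b else Suc b)"
        using ab unfolding mat_delete_def by auto
    qed
    show ?thesis unfolding eq using ab by (intro E) auto
  qed
  show ?thesis unfolding cofactor_def
    by (intro continuous_on_mult continuous_on_const continuous_on_det[OF C' E'])
qed

locale sectorial_pair_mean = sectorial_pair A B n \<tau> + unit_interval_prob \<nu>
  for A B n \<tau> \<nu>
begin

lemma continuous_on_harm_mean_entry:
  assumes ij: "i < n" "j < n"
  shows "continuous_on {0..1} (\<lambda>s. harm_mean s A B $$ (i,j))"
proof -
  have entry: "continuous_on S (\<lambda>s. inv_mean s $$ (i,j))" if "i < n" "j < n" for S i j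
  proof -
    have "inv_mean s $$ (i,j) = complex_of_real (1 - s) * minv A $$ (i,j) + complex_of_real s * minv B $$ (i,j)"
      for s using minv_A minv_B that unfolding arith_mean_def by auto
    then show ?thesis by (simp add: continuous_intros)
  qed
  have eq: "harm_mean s A B $$ (i,j) = inverse (det (inv_mean s)) * cofactor (inv_mean s) j i"
    if "s \<in> {0..1}" for s
    using minv_of_det_nonzero(4)[OF inv_mean_carrier det_inv_mean] that ij inv_mean_carrier[of s]
    unfolding harm_mean_eq adj_mat_def by auto
  have "continuous_on {0..1} (\<lambda>s. inverse (det (inv_mean s)) * cofactor (inv_mean s) j i)"
    using det_inv_mean
    by (intro continuous_on_mult continuous_on_inverse continuous_on_det[OF inv_mean_carrier entry]
        continuous_on_cofactor[OF inv_mean_carrier entry] ij) auto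
  then show ?thesis by (rule continuous_on_eq) (use eq in auto)
qed

lemma continuous_on_sesq_harm_mean:
  assumes x: "x \<in> carrier_vec n"
  shows "continuous_on {0..1} (\<lambda>s. sesq (harm_mean s A B) x x)"
proof -
  have "continuous_on {0..1} (\<lambda>s. \<Sum>i<n. \<Sum>j<n. harm_mean s A B $$ (i,j) * x $ j * cnj (x $ i))"
    by (intro continuous_on_sum continuous_on_mult continuous_on_const continuous_on_harm_mean_entry) auto
  then show ?thesis
    by (rule continuous_on_eq) (use sesq_sum[OF harm_mean_carrier x x] in auto)
qed

lemma op_mean_carrier: "op_mean \<nu> A B \<in> carrier_mat n n"
  unfolding op_mean_def using A by auto

lemma sesq_op_mean:
  assumes x: "x \<in> carrier_vec n"
  shows "sesq (op_mean \<nu> A B) x x = (\<integral>s. sesq (harm_mean s A B) x x \<partial>\<nu>)"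
proof -
  let ?g = "\<lambda>i j s. harm_mean s A B $$ (i,j) * x $ j * cnj (x $ i)"
  have int: "integrable \<nu> (?g i j)" if "i < n" "j < n" for i j
    using integrable_continuous[OF continuous_on_harm_mean_entry[OF that]] by (intro integrable_mult_left)
  have "sesq (op_mean \<nu> A B) x x = (\<Sum>i<n. \<Sum>j<n. (\<integral>s. harm_mean s A B $$ (i,j) \<partial>\<nu>) * x $ j * cnj (x $ i))"
    unfolding sesq_sum[OF op_mean_carrier x x] using A by (simp add: op_mean_def)
  also have "\<dots> = (\<Sum>i<n. \<Sum>j<n. (\<integral>s. ?g i j s \<partial>\<nu>))"
    by (simp add: integral_mult_left_zero)
  also have "\<dots> = (\<Sum>i<n. (\<integral>s. (\<Sum>j<n. ?g i j s) \<partial>\<nu>))"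
    using int by (intro sum.cong refl Bochner_Integration.integral_sum[symmetric]) auto
  also have "\<dots> = (\<integral>s. (\<Sum>i<n. \<Sum>j<n. ?g i j s) \<partial>\<nu>)"
    using int by (intro Bochner_Integration.integral_sum[symmetric] Bochner_Integration.integrable_sum) auto
  also have "\<dots> = (\<integral>s. sesq (harm_mean s A B) x x \<partial>\<nu>)"
    using sesq_sum[OF harm_mean_carrier x x] space_eq by (intro Bochner_Integration.integral_cong) auto
  finally show ?thesis .
qed

lemma re_sesq_op_mean:
  assumes x: "x \<in> carrier_vec n"
  shows "Re (sesq (op_mean \<nu> A B) x x) = (\<integral>s. Re (sesq (harm_mean s A B) x x) \<partial>\<nu>)"
  unfolding sesq_op_mean[OF x]
  using integral_Re[OF integrable_continuous[OF continuous_on_sesq_harm_mean[OF x]]] by simp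

lemma continuous_on_re_sesq_harm_mean:
  "x \<in> carrier_vec n \<Longrightarrow> continuous_on {0..1} (\<lambda>s. Re (sesq (harm_mean s A B) x x))"
  using continuous_on_sesq_harm_mean by (intro continuous_intros)

lemma re_sesq_op_mean_le:
  assumes m: "(\<integral>s. s \<partial>\<nu>) = t" and x: "x \<in> carrier_vec n"
  shows "Re (sesq (op_mean \<nu> A B) x x) \<le> (1 + \<tau>\<^sup>2) * Re (sesq (arith_mean t A B) x x)"
proof -
  let ?a = "Re (sesq A x x)" and ?b = "Re (sesq B x x)"
  have "Re (sesq (op_mean \<nu> A B) x x) \<le> (\<integral>s. (1 + \<tau>\<^sup>2) * ?a + ((1 + \<tau>\<^sup>2) * (?b - ?a)) * s \<partial>\<nu>)"
    unfolding re_sesq_op_mean[OF x]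
  proof (rule integral_mono_continuous[OF continuous_on_re_sesq_harm_mean[OF x]])
    fix s :: real assume "0 \<le> s" "s \<le> 1"
    then show "Re (sesq (harm_mean s A B) x x) \<le> (1 + \<tau>\<^sup>2) * ?a + ((1 + \<tau>\<^sup>2) * (?b - ?a)) * s"
      using re_sesq_harm_mean_le[OF _ _ x, of s] by (simp add: sesq_arith_mean[OF A B x x] algebra_simps)
  qed (intro continuous_intros)
  also have "\<dots> = (1 + \<tau>\<^sup>2) * Re (sesq (arith_mean t A B) x x)"
    unfolding integral_affine m sesq_arith_mean[OF A B x x] by (simp add: algebra_simps)
  finally show ?thesis .
qed

lemma re_sesq_op_mean_ge:
  assumes m: "(\<integral>s. s \<partial>\<nu>) = t" and t: "0 \<le> t" "t \<le> 1" and x: "x \<in> carrier_vec n"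
  shows "Re (sesq (harm_mean t A B) x x) \<le> (1 + \<tau>\<^sup>2) * Re (sesq (op_mean \<nu> A B) x x)"
proof -
  define y where "y = harm_mean t A B *\<^sub>v x"
  note eq = re_sesq_harm_mean_eq[OF t x, folded y_def]
  let ?c = "2 * Re (x \<bullet>c y)" and ?a = "Re (sesq (minv A) y y)" and ?b = "Re (sesq (minv B) y y)"
  have "Re (sesq (harm_mean t A B) x x) = (\<integral>s. (?c - ?a) + (?a - ?b) * s \<partial>\<nu>)"
    unfolding eq(1) integral_affine m by (simp add: algebra_simps)
  also have "\<dots> \<le> (\<integral>s. (1 + \<tau>\<^sup>2) * Re (sesq (harm_mean s A B) x x) \<partial>\<nu>)"
  proof (rule integral_mono_continuous)
    show "continuous_on {0..1} (\<lambda>s. (1 + \<tau>\<^sup>2) * Re (sesq (harm_mean s A B) x x))"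
      by (intro continuous_intros continuous_on_re_sesq_harm_mean x)
    fix s :: real assume "0 \<le> s" "s \<le> 1"
    then show "(?c - ?a) + (?a - ?b) * s \<le> (1 + \<tau>\<^sup>2) * Re (sesq (harm_mean s A B) x x)"
      using re_sesq_harm_mean_ge[OF _ _ x eq(2), of s] by (simp add: algebra_simps)
  qed (intro continuous_intros)
  also have "\<dots> = (1 + \<tau>\<^sup>2) * Re (sesq (op_mean \<nu> A B) x x)"
    unfolding re_sesq_op_mean[OF x] by simp
  finally show ?thesis .
qed

lemma loewner_le_op_mean_arith_mean:
  assumes m: "(\<integral>s. s \<partial>\<nu>) = t"
  shows "loewner_le (re_mat (op_mean \<nu> A B)) (complex_of_real (1 + \<tau>\<^sup>2) \<cdot>\<^sub>m re_mat (arith_mean t A B))"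
proof -
  have N: "arith_mean t A B \<in> carrier_mat n n" unfolding arith_mean_def using A B by auto
  have "loewner_le (complex_of_real 1 \<cdot>\<^sub>m re_mat (op_mean \<nu> A B))
      (complex_of_real (1 + \<tau>\<^sup>2) \<cdot>\<^sub>m re_mat (arith_mean t A B))"
  proof (rule loewner_le_re_mat[OF op_mean_carrier N])
    fix x :: "complex vec" assume "x \<in> carrier_vec n"
    then show "1 * Re (sesq (op_mean \<nu> A B) x x) \<le> (1 + \<tau>\<^sup>2) * Re (sesq (arith_mean t A B) x x)"
      using re_sesq_op_mean_le[OF m] by simp
  qed
  then show ?thesis unfolding smult_one_re_mat[OF op_mean_carrier] .
qed

lemma loewner_le_harm_mean_op_mean:
  assumes m: "(\<integral>s. s \<partial>\<nu>) = t" and t: "0 \<le> t" "t \<le> 1"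
  shows "loewner_le (complex_of_real (1 / (1 + \<tau>\<^sup>2)) \<cdot>\<^sub>m re_mat (harm_mean t A B)) (re_mat (op_mean \<nu> A B))"
proof -
  have pos: "0 < 1 + \<tau>\<^sup>2" by (simp add: add_pos_nonneg)
  have "loewner_le (complex_of_real (1 / (1 + \<tau>\<^sup>2)) \<cdot>\<^sub>m re_mat (harm_mean t A B))
      (complex_of_real 1 \<cdot>\<^sub>m re_mat (op_mean \<nu> A B))"
    using re_sesq_op_mean_ge[OF m t] pos
    by (intro loewner_le_re_mat[OF harm_mean_carrier[OF t] op_mean_carrier])
      (simp add: pos_divide_le_eq mult.commute)
  then show ?thesis unfolding smult_one_re_mat[OF op_mean_carrier] .
qed

end

theorem mainTheorem9:
  fixes A B :: "complex mat" and n :: nat and \<alpha> t :: real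
    and f :: "real \<Rightarrow> real" and \<nu> :: "real measure"
  assumes "A \<in> carrier_mat n n" and "B \<in> carrier_mat n n"
    and "accretive A" and "accretive B"
    and "0 \<le> \<alpha>" and "\<alpha> < pi / 2"
    and "num_range A \<subseteq> sector \<alpha>" and "num_range B \<subseteq> sector \<alpha>"
    and "matrix_monotone_class f"
    and "represents \<nu> f"
    and "(f has_real_derivative t) (at 1)" and "0 < t" and "t < 1"
  shows "loewner_le (complex_of_real ((cos \<alpha>)\<^sup>2) \<cdot>\<^sub>m re_mat (harm_mean t A B)) (re_mat (op_mean \<nu> A B))
       \<and> loewner_le (re_mat (op_mean \<nu> A B)) (complex_of_real (1 / (cos \<alpha>)\<^sup>2) \<cdot>\<^sub>m re_mat (arith_mean t A B))"
proof -
  have cos: "0 < cos \<alpha>" using assms(5,6) by (intro cos_gt_zero_pi) auto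
  have tan: "0 \<le> tan \<alpha>" using assms(5,6) tan_gt_zero[of \<alpha>] by (cases "\<alpha> = 0") auto
  have sec: "1 / (cos \<alpha>)\<^sup>2 = 1 + (tan \<alpha>)\<^sup>2"
    using tan_sec[of \<alpha>] cos by (simp add: inverse_eq_divide power_one_over)
  then have cos_sq: "(cos \<alpha>)\<^sup>2 = 1 / (1 + (tan \<alpha>)\<^sup>2)" by (metis inverse_eq_divide inverse_inverse_eq)
  have \<nu>: "prob_space \<nu>" "sets \<nu> = sets (restrict_space borel {0..1})"
    and R: "\<forall>x>0. f x = (\<integral>s. inverse ((1 - s) + s * inverse x) \<partial>\<nu>)"
    using assms(10) unfolding represents_def by auto
  interpret sectorial_pair_mean A B n "tan \<alpha>" \<nu>
    unfolding sectorial_pair_mean_def sectorial_pair_def unit_interval_prob_def unit_interval_prob_axioms_def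
    using assms(1,2) tan \<nu>
      sectorial_of_num_range[OF assms(1,7)] sectorial_of_num_range[OF assms(2,8)]
      re_positive_of_num_range[OF assms(1,7)] re_positive_of_num_range[OF assms(2,8)] by blast
  have mean: "(\<integral>s. s \<partial>\<nu>) = t" using mean_eq_derivative[OF R assms(11)] .
  show ?thesis unfolding cos_sq sec
    using loewner_le_harm_mean_op_mean[OF mean] loewner_le_op_mean_arith_mean[OF mean] assms(12,13) by simp
qed

end
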